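(* Let $\alpha\ge1$, $\beta$ odd, and let ${\cal C}=\langle (b\mid 0),(\ell\mid fh+2f)\rangle\subseteq R_{\alpha,\beta}$ be a $\mathbb{Z}_2\mathbb{Z}_4$-additive cyclic code, where $f,h,g\in\mathbb{Z}_4[x]$ with $fhg=x^\beta-1$, $b\in\mathbb{Z}_2[x]$ divides $x^\alpha-1$, and $\ell\in\mathbb{Z}_2[x]/(x^\alpha-1)$. Then there exists $\ell'\in\mathbb{Z}_2[x]/(x^\alpha-1)$ such that ${\cal C}=\langle (b\mid 0),(\ell\tilde g\mid 2fg),(\ell'\mid fh)\rangle$.
   Context: $R_{\alpha,\beta}=\mathbb{Z}_2[x]/(x^\alpha-1)\times\mathbb{Z}_4[x]/(x^\beta-1)$ is a $\mathbb{Z}_4[x]$-module via $p\star(b\mid a)=(\tilde pb\mid pa)$, where $\tilde p\in\mathbb{Z}_2[x]$ is the reduction of $p$ mod 2. A $\mathbb{Z}_2\mathbb{Z}_4$-additive cyclic code is a $\mathbb{Z}_4[x]$-submodule of $R_{\alpha,\beta}$; $\langle\cdot\rangle$ denotes the generated submodule. *)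

theory Defs
  imports "HOL-Computational_Algebra.Polynomial" "HOL-Library.Numeral_Type"
begin

text \<open>An element of R_{alpha,beta} = Z2[x]/(x^alpha-1) x Z4[x]/(x^beta-1) is represented by
  its canonical representative pair (b, a) with deg b < alpha, deg a < beta.\<close>

definition cyc_red :: "nat \<Rightarrow> 'a::comm_ring_1 poly \<Rightarrow> 'a poly" where
  "cyc_red n p = (\<Sum>j\<le>degree p. monom (coeff p j) (j mod n))"

definition mod2 :: "4 poly \<Rightarrow> 2 poly" where
  "mod2 p = map_poly (\<lambda>c. of_int (Rep_bit0 c)) p"

text \<open>The Z4[x]-submodule of R_{alpha,beta} generated by a finite list of elements:
  all Z4[x]-linear combinations  sum_i p_i * (b_i | a_i) = (sum_i p_i~ b_i | sum_i p_i a_i),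
  reduced to canonical representatives.\<close>
definition gen_code :: "nat \<Rightarrow> nat \<Rightarrow> (2 poly \<times> 4 poly) list \<Rightarrow> (2 poly \<times> 4 poly) set" where
  "gen_code \<alpha> \<beta> gs =
     {(cyc_red \<alpha> (\<Sum>i<length gs. mod2 (ps i) * fst (gs ! i)),
       cyc_red \<beta> (\<Sum>i<length gs. ps i * snd (gs ! i))) | ps. True}"

end

theory Submission
  imports Defs
begin

text \<open>Since \<open>\<beta>\<close> is odd it is a unit in \<open>\<int>\<^sub>4\<close>, so differentiating
  \<open>f h g = x\<^sup>\<beta> - 1\<close> yields a Bezout identity \<open>A h + B g = 1\<close> in \<open>\<int>\<^sub>4[x]\<close>.
  With \<open>P = 1 + 2A - B g\<close> one has \<open>P (f h + 2f) \<equiv> f h\<close> and \<open>g (f h + 2f) \<equiv> 2 f g\<close>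
  modulo \<open>x\<^sup>\<beta> - 1\<close>, while \<open>f h + 2 f = B (2 f g) + (1 + 2A) (f h)\<close>; reducing mod 2,
  \<open>(P mod 2) l\<close> is the required \<open>\<ell>'\<close>. So each generating set lies in the span of the other.\<close>

definition red2 :: "4 \<Rightarrow> 2" where
  "red2 c = of_int (Rep_bit0 c)"

lemma red2_of_int: "red2 (of_int z) = of_int z"
proof -
  have "Rep_bit0 (of_int z :: 4) = z mod 4"
    by (simp add: bit0.of_int_eq Abs_bit0_inverse)
  moreover have "(of_int (z mod 4) :: 2) = of_int z"
    by (simp add: bit0.of_int_eq) (metis mod_mod_cancel dvd_def numeral_Bit0_eq_double)
  ultimately show ?thesis
    by (simp add: red2_def)
qed

lemma red2_add: "red2 (a + b) = red2 a + red2 b"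
  by (induct a, induct b) (metis of_int_add red2_of_int)

lemma red2_mult: "red2 (a * b) = red2 a * red2 b"
  by (induct a, induct b) (metis of_int_mult red2_of_int)

lemma red2_0: "red2 0 = 0"
  by (metis of_int_0 red2_of_int)

lemma red2_1: "red2 1 = 1"
  by (metis of_int_1 red2_of_int)

lemma mod2_eq_map_poly: "mod2 p = map_poly red2 p"
  by (simp add: mod2_def red2_def[abs_def])

lemma mod2_add: "mod2 (p + q) = mod2 p + mod2 q"
  by (rule poly_eqI) (simp add: mod2_eq_map_poly coeff_map_poly red2_0 red2_add)

lemma mod2_diff: "mod2 (p - q) = mod2 p - mod2 q"
  by (metis add_diff_cancel diff_add_cancel mod2_add)

lemma mod2_mult: "mod2 (p * q) = mod2 p * mod2 q"
proof (induct p)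
  case 0
  then show ?case by (simp add: mod2_eq_map_poly)
next
  case (pCons a p)
  have "mod2 (smult a q) = smult (red2 a) (mod2 q)"
    unfolding mod2_eq_map_poly by (rule map_poly_smult) (auto simp: red2_0 red2_mult)
  with pCons show ?case
    by (simp add: mod2_add) (simp add: mod2_eq_map_poly map_poly_pCons red2_0)
qed

lemma mod2_1: "mod2 1 = 1"
  by (simp add: mod2_eq_map_poly red2_1)

lemma mod2_2: "mod2 2 = 0"
proof -
  have "(2 :: 2 poly) = [:2:]"
    by (metis of_nat_numeral of_nat_poly)
  moreover have "(2 :: 2) = 0"
    by simp
  ultimately have "(2 :: 2 poly) = 0"
    by simp
  then show ?thesis
    by (metis mod2_add mod2_1 one_add_one)
qed

lemma four_eq_0_poly: "(4 :: 4 poly) = 0"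
proof -
  have "(4 :: 4 poly) = [:4:]"
    by (metis of_nat_numeral of_nat_poly)
  moreover have "(4 :: 4) = 0"
    by simp
  ultimately show ?thesis
    by simp
qed

lemma odd_of_nat_square_4: "odd n \<Longrightarrow> (of_nat n :: 4) * of_nat n = 1"
proof -
  assume "odd n"
  then obtain k where "n = 2 * k + 1"
    using oddE by blast
  moreover have four: "(4 :: 4) = 0"
    by simp
  ultimately show ?thesis
    by (simp add: algebra_simps four)
qed

text \<open>The library's \<open>pderiv\<close> requires a ring without zero divisors, which \<open>\<int>\<^sub>4\<close> is not.\<close>

function formal_deriv :: "'a::comm_ring_1 poly \<Rightarrow> 'a poly" where
  "formal_deriv (pCons a p) = (if p = 0 then 0 else p + pCons 0 (formal_deriv p))"
  by (auto intro: pCons_cases)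

termination
  by (relation "measure degree") simp_all

declare formal_deriv.simps [simp del]

lemma formal_deriv_0 [simp]: "formal_deriv 0 = 0"
  using formal_deriv.simps [of 0 0] by simp

lemma formal_deriv_pCons: "formal_deriv (pCons a p) = p + pCons 0 (formal_deriv p)"
  by (simp add: formal_deriv.simps)

lemma coeff_formal_deriv: "coeff (formal_deriv p) n = of_nat (Suc n) * coeff p (Suc n)"
  by (induct p arbitrary: n)
    (auto simp add: formal_deriv_pCons coeff_pCons algebra_simps split: nat.split)

lemma formal_deriv_add: "formal_deriv (p + q) = formal_deriv p + formal_deriv q"
  by (rule poly_eqI) (simp add: coeff_formal_deriv algebra_simps)

lemma formal_deriv_diff: "formal_deriv (p - q) = formal_deriv p - formal_deriv q"
  by (rule poly_eqI) (simp add: coeff_formal_deriv algebra_simps)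

lemma formal_deriv_smult: "formal_deriv (smult a p) = smult a (formal_deriv p)"
  by (rule poly_eqI) (simp add: coeff_formal_deriv algebra_simps)

lemma formal_deriv_mult: "formal_deriv (p * q) = p * formal_deriv q + q * formal_deriv p"
  by (induct p) (auto simp: formal_deriv_add formal_deriv_smult formal_deriv_pCons algebra_simps)

lemma formal_deriv_1: "formal_deriv 1 = 0"
  by (rule poly_eqI) (simp add: coeff_formal_deriv)

lemma X_times_formal_deriv_monom: "pCons 0 (formal_deriv (monom 1 n)) = monom (of_nat n) n"
  by (rule poly_eqI) (auto simp: coeff_formal_deriv coeff_pCons split: nat.split)

text \<open>Apply \<open>x \<cdot> d/dx\<close> to \<open>f h g = x\<^sup>n - 1\<close>: the right-hand side gives \<open>n (f h g + 1)\<close>,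
  the left-hand side lies in \<open>(h, g)\<close> up to the term \<open>f h g\<close>.\<close>

lemma bezout_factors_of_cyclic:
  fixes f h g :: "'a::comm_ring_1 poly" and c :: 'a
  assumes unit: "of_nat n * c = 1"
    and fhg: "f * h * g = monom 1 n - 1"
  shows "\<exists>A B. A * h + B * g = 1"
proof -
  define X where "X = (pCons 0 1 :: 'a poly)"
  define C :: "'a poly" where "C = [:c:]"
  have "of_nat n * C = [:of_nat n * c:]"
    by (simp add: C_def of_nat_poly)
  then have NC: "of_nat n * C = 1"
    using unit by (simp add: one_pCons)
  have "monom (of_nat n) n = of_nat n * monom 1 n"
    by (simp add: of_nat_poly smult_monom)
  then have "X * formal_deriv (f * h * g) = of_nat n * (f * h * g + 1)"
    unfolding fhg X_def by (simp add: formal_deriv_diff formal_deriv_1 X_times_formal_deriv_monom)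
  then have deriv_eq: "X * (f * h * formal_deriv g + g * (f * formal_deriv h + h * formal_deriv f))
      = of_nat n * (f * h * g + 1)"
    by (simp add: formal_deriv_mult)
  define A where "A = C * X * (formal_deriv f * g + f * formal_deriv g) - f * g"
  define B where "B = C * X * f * formal_deriv h"
  have "A * h + B * g
      = C * (X * (f * h * formal_deriv g + g * (f * formal_deriv h + h * formal_deriv f))) - f * h * g"
    unfolding A_def B_def by (simp add: algebra_simps)
  also have "\<dots> = (of_nat n * C) * (f * h * g + 1) - f * h * g"
    by (simp only: deriv_eq) (simp add: algebra_simps)
  also have "\<dots> = 1"
    by (simp add: NC)
  finally show ?thesis
    by blast
qed

lemma cyc_red_eq_sum_atMost:
  assumes "degree p \<le> N"
  shows "cyc_red n p = (\<Sum>j\<le>N. monom (coeff p j) (j mod n))"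
  unfolding cyc_red_def
  by (rule sum.mono_neutral_left) (use assms in \<open>auto simp: coeff_eq_0\<close>)

lemma cyc_red_add: "cyc_red n (p + q) = cyc_red n p + cyc_red n q"
proof -
  define N where "N = max (degree p) (degree q)"
  have "degree (p + q) \<le> N" "degree p \<le> N" "degree q \<le> N"
    using degree_add_le_max[of p q] by (auto simp: N_def)
  then show ?thesis
    by (simp add: cyc_red_eq_sum_atMost[where N = N] sum.distrib add_monom[symmetric])
qed

lemma cyc_red_0: "cyc_red n 0 = 0"
  by (simp add: cyc_red_def)

lemma cyc_red_diff: "cyc_red n (p - q) = cyc_red n p - cyc_red n q"
  by (metis add_diff_cancel cyc_red_add diff_add_cancel)

lemma cyc_red_sum: "cyc_red n (sum F A) = (\<Sum>i\<in>A. cyc_red n (F i))"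
  by (induct A rule: infinite_finite_induct) (auto simp: cyc_red_0 cyc_red_add)

lemma cyc_red_monom: "cyc_red n (monom c k) = monom c (k mod n)"
proof -
  have "cyc_red n (monom c k) = (\<Sum>j\<le>k. monom (coeff (monom c k) j) (j mod n))"
    by (rule cyc_red_eq_sum_atMost) (simp add: degree_monom_le)
  also have "\<dots> = monom c (k mod n)"
    by (subst sum.remove[of _ k]) (auto intro!: sum.neutral)
  finally show ?thesis .
qed

lemma cyc_red_mult_cyclic: "cyc_red n (p * (monom 1 n - 1)) = 0"
proof -
  have "p * (monom 1 n - 1) = (\<Sum>i\<le>degree p. monom (coeff p i) (i + n) - monom (coeff p i) i)"
    by (subst (1) poly_as_sum_of_monoms[symmetric])
      (simp add: sum_distrib_right sum_distrib_left algebra_simps mult_monom sum_subtractf)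
  then show ?thesis
    by (simp add: cyc_red_sum cyc_red_diff cyc_red_monom)
qed

lemma cyc_red_add_mult_cyclic: "cyc_red n (p + k * (monom 1 n - 1)) = cyc_red n p"
  by (simp add: cyc_red_add cyc_red_mult_cyclic)

definition lin_span :: "(2 poly \<times> 4 poly) list \<Rightarrow> (2 poly \<times> 4 poly) set" where
  "lin_span gs =
     {(\<Sum>i<length gs. mod2 (ps i) * fst (gs ! i), \<Sum>i<length gs. ps i * snd (gs ! i)) | ps. True}"

lemma gen_code_eq_image_lin_span:
  "gen_code \<alpha> \<beta> gs = map_prod (cyc_red \<alpha>) (cyc_red \<beta>) ` lin_span gs"
  unfolding gen_code_def lin_span_def by auto

lemma zero_in_lin_span: "(0, 0) \<in> lin_span gs"
  unfolding lin_span_def by (rule CollectI, rule exI[of _ "\<lambda>_. 0"]) (simp add: mod2_eq_map_poly)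

lemma nth_in_lin_span:
  assumes "j < length gs"
  shows "gs ! j \<in> lin_span gs"
proof -
  let ?ps = "\<lambda>i. if i = j then 1 else 0 :: 4 poly"
  have "mod2 (?ps i) * u = (if i = j then u else 0)" "?ps i * v = (if i = j then v else 0)" for i u v
    by (simp_all add: mod2_eq_map_poly red2_1)
  then show ?thesis
    unfolding lin_span_def using assms
    by (intro CollectI exI[of _ ?ps]) simp
qed

lemma generator_in_lin_span: "x \<in> set gs \<Longrightarrow> x \<in> lin_span gs"
  by (metis in_set_conv_nth nth_in_lin_span)

lemma lin_span_add:
  assumes "(u, v) \<in> lin_span gs" and "(u', v') \<in> lin_span gs"
  shows "(u + u', v + v') \<in> lin_span gs"
proof -
  obtain ps ps' where
    "u = (\<Sum>i<length gs. mod2 (ps i) * fst (gs ! i))" "v = (\<Sum>i<length gs. ps i * snd (gs ! i))"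
    "u' = (\<Sum>i<length gs. mod2 (ps' i) * fst (gs ! i))" "v' = (\<Sum>i<length gs. ps' i * snd (gs ! i))"
    using assms unfolding lin_span_def by blast
  then show ?thesis
    unfolding lin_span_def
    by (intro CollectI exI[of _ "\<lambda>i. ps i + ps' i"])
      (simp add: mod2_add sum.distrib distrib_right)
qed

lemma lin_span_smult:
  assumes "(u, v) \<in> lin_span gs"
  shows "(mod2 p * u, p * v) \<in> lin_span gs"
proof -
  obtain ps where
    "u = (\<Sum>i<length gs. mod2 (ps i) * fst (gs ! i))" "v = (\<Sum>i<length gs. ps i * snd (gs ! i))"
    using assms unfolding lin_span_def by blast
  then show ?thesis
    unfolding lin_span_def
    by (intro CollectI exI[of _ "\<lambda>i. p * ps i"])
      (simp add: mod2_mult sum_distrib_left mult.assoc)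
qed

lemma lin_span_Nil: "lin_span [] = {(0, 0)}"
  by (simp add: lin_span_def)

lemma lin_span_ConsE:
  assumes "(u, v) \<in> lin_span (g # gs)"
  obtains p u' v' where "u = mod2 p * fst g + u'" "v = p * snd g + v'" "(u', v') \<in> lin_span gs"
proof -
  obtain ps where
    "u = (\<Sum>i<Suc (length gs). mod2 (ps i) * fst ((g # gs) ! i))"
    "v = (\<Sum>i<Suc (length gs). ps i * snd ((g # gs) ! i))"
    using assms unfolding lin_span_def by auto
  then have "u = mod2 (ps 0) * fst g + (\<Sum>i<length gs. mod2 (ps (Suc i)) * fst (gs ! i))"
    "v = ps 0 * snd g + (\<Sum>i<length gs. ps (Suc i) * snd (gs ! i))"
    by (simp_all only: sum.lessThan_Suc_shift nth_Cons_0 nth_Cons_Suc)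
  moreover have "((\<Sum>i<length gs. mod2 (ps (Suc i)) * fst (gs ! i)),
      (\<Sum>i<length gs. ps (Suc i) * snd (gs ! i))) \<in> lin_span gs"
    unfolding lin_span_def by (rule CollectI, rule exI[of _ "\<lambda>i. ps (Suc i)"]) simp
  ultimately show ?thesis
    using that by blast
qed

lemma lin_span_subset_mod_cyclic:
  assumes "\<forall>(u, v) \<in> set hs. \<exists>v' k. (u, v') \<in> lin_span gs \<and> v = v' + k * (monom 1 \<beta> - 1)"
    and "(u, v) \<in> lin_span hs"
  shows "\<exists>v' k. (u, v') \<in> lin_span gs \<and> v = v' + k * (monom 1 \<beta> - 1)"
  using assms
proof (induct hs arbitrary: u v)
  case Nil
  then have "u = 0" "v = 0"
    by (auto simp: lin_span_Nil)
  then show ?case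
    using zero_in_lin_span by (metis add_0 mult_zero_left)
next
  case (Cons h hs)
  obtain p u1 v1 where uv: "u = mod2 p * fst h + u1" "v = p * snd h + v1"
    and uv1: "(u1, v1) \<in> lin_span hs"
    using lin_span_ConsE[OF Cons.prems(2)] by blast
  obtain w0 k0 where w0: "(fst h, w0) \<in> lin_span gs" "snd h = w0 + k0 * (monom 1 \<beta> - 1)"
    using Cons.prems(1) by (cases h) auto
  obtain w1 k1 where w1: "(u1, w1) \<in> lin_span gs" "v1 = w1 + k1 * (monom 1 \<beta> - 1)"
    using Cons.hyps[OF _ uv1] Cons.prems(1) by auto
  have "(u, p * w0 + w1) \<in> lin_span gs"
    unfolding uv by (intro lin_span_add lin_span_smult w0(1) w1(1))
  moreover have "v = (p * w0 + w1) + (p * k0 + k1) * (monom 1 \<beta> - 1)"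
    unfolding uv w0(2) w1(2) by (simp add: algebra_simps)
  ultimately show ?case
    by blast
qed

lemma gen_code_subsetI:
  assumes "\<forall>(u, v) \<in> set hs. \<exists>v' k. (u, v') \<in> lin_span gs \<and> v = v' + k * (monom 1 \<beta> - 1)"
  shows "gen_code \<alpha> \<beta> hs \<subseteq> gen_code \<alpha> \<beta> gs"
proof
  fix z
  assume "z \<in> gen_code \<alpha> \<beta> hs"
  then obtain u v where z: "z = (cyc_red \<alpha> u, cyc_red \<beta> v)" and "(u, v) \<in> lin_span hs"
    unfolding gen_code_eq_image_lin_span by auto
  then obtain v' k where "(u, v') \<in> lin_span gs" "v = v' + k * (monom 1 \<beta> - 1)"
    using lin_span_subset_mod_cyclic[OF assms] by blast
  then show "z \<in> gen_code \<alpha> \<beta> gs"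
    unfolding z gen_code_eq_image_lin_span by (force simp: cyc_red_add_mult_cyclic)
qed

lemma fh_2f_eq_combination:
  fixes f h g A B :: "'a::comm_ring_1 poly"
  assumes "A * h + B * g = 1"
  shows "B * (2 * f * g) + (1 + 2 * A) * (f * h) = f * h + 2 * f"
proof -
  have "B * (2 * f * g) + (1 + 2 * A) * (f * h) = f * h + 2 * f * (A * h + B * g)"
    by (simp add: algebra_simps)
  then show ?thesis
    by (simp add: assms)
qed

lemma fh_eq_mult_fh_2f:
  fixes f h g A B :: "4 poly"
  assumes "A * h + B * g = 1"
  shows "f * h = (1 + 2 * A - B * g) * (f * h + 2 * f) + B * (f * h * g)"
proof -
  have Ah: "A * h = 1 - B * g"
    using assms by (simp add: eq_diff_eq)
  have "(1 + 2 * A - B * g) * (f * h + 2 * f) + B * (f * h * g)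
      = f * h + 2 * f * (1 + A * h - B * g) + 4 * (A * f)"
    by (simp add: algebra_simps)
  also have "\<dots> = f * h + 4 * (f * (1 - B * g) + A * f)"
    unfolding Ah by (simp add: algebra_simps)
  also have "\<dots> = f * h"
    by (simp add: four_eq_0_poly)
  finally show ?thesis
    by (rule sym)
qed

lemma gen_code_mono:
  assumes "set hs \<subseteq> lin_span gs"
  shows "gen_code \<alpha> \<beta> hs \<subseteq> gen_code \<alpha> \<beta> gs"
proof (rule gen_code_subsetI, clarify)
  fix u v
  assume "(u, v) \<in> set hs"
  then show "\<exists>v' k. (u, v') \<in> lin_span gs \<and> v = v' + k * (monom 1 \<beta> - 1)"
    using assms by (intro exI[of _ v] exI[of _ 0]) auto
qed

lemma gen_code_fh_2f_subset:
  fixes f h g A B :: "4 poly"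
  assumes "A * h + B * g = 1"
  defines "P \<equiv> 1 + 2 * A - B * g"
  shows "gen_code \<alpha> \<beta> [(b, 0), (l, f * h + 2 * f)]
    \<subseteq> gen_code \<alpha> \<beta> [(b, 0), (l * mod2 g, 2 * f * g), (mod2 P * l, f * h)]"
    (is "gen_code \<alpha> \<beta> ?C \<subseteq> gen_code \<alpha> \<beta> ?D")
proof (rule gen_code_mono)
  have gens: "(b, 0) \<in> lin_span ?D" "(l * mod2 g, 2 * f * g) \<in> lin_span ?D"
    "(mod2 P * l, f * h) \<in> lin_span ?D"
    by (simp_all add: generator_in_lin_span)
  have "mod2 B * (l * mod2 g) + mod2 (1 + 2 * A) * (mod2 P * l) = l"
    by (simp add: P_def mod2_add mod2_diff mod2_mult mod2_1 mod2_2 algebra_simps)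
  moreover have "(mod2 B * (l * mod2 g) + mod2 (1 + 2 * A) * (mod2 P * l),
      B * (2 * f * g) + (1 + 2 * A) * (f * h)) \<in> lin_span ?D"
    by (intro lin_span_add lin_span_smult gens)
  ultimately have "(l, f * h + 2 * f) \<in> lin_span ?D"
    by (simp only: fh_2f_eq_combination[OF assms(1)])
  then show "set ?C \<subseteq> lin_span ?D"
    using gens by simp
qed

lemma gen_code_subset_fh_2f:
  fixes f h g A B :: "4 poly"
  assumes "A * h + B * g = 1" and "f * h * g = monom 1 \<beta> - 1"
  defines "P \<equiv> 1 + 2 * A - B * g"
  shows "gen_code \<alpha> \<beta> [(b, 0), (l * mod2 g, 2 * f * g), (mod2 P * l, f * h)]
    \<subseteq> gen_code \<alpha> \<beta> [(b, 0), (l, f * h + 2 * f)]"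
    (is "gen_code \<alpha> \<beta> ?D \<subseteq> gen_code \<alpha> \<beta> ?C")
proof (intro gen_code_subsetI)
  let ?X = "monom 1 \<beta> - 1 :: 4 poly"
  have gen: "(l, f * h + 2 * f) \<in> lin_span ?C"
    by (simp add: generator_in_lin_span)
  have "\<exists>v' k. (b, v') \<in> lin_span ?C \<and> 0 = v' + k * ?X"
    by (intro exI[of _ 0] conjI) (simp_all add: generator_in_lin_span)
  moreover have "\<exists>v' k. (l * mod2 g, v') \<in> lin_span ?C \<and> 2 * f * g = v' + k * ?X"
  proof (intro exI conjI)
    show "(l * mod2 g, g * (f * h + 2 * f)) \<in> lin_span ?C"
      using lin_span_smult[OF gen, of g] by (simp add: mult.commute)
    show "2 * f * g = g * (f * h + 2 * f) + (- 1) * ?X"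
      using assms(2) by (simp add: algebra_simps)
  qed
  moreover have "\<exists>v' k. (mod2 P * l, v') \<in> lin_span ?C \<and> f * h = v' + k * ?X"
  proof (intro exI conjI)
    show "(mod2 P * l, P * (f * h + 2 * f)) \<in> lin_span ?C"
      using lin_span_smult[OF gen, of P] .
    show "f * h = P * (f * h + 2 * f) + B * ?X"
      using fh_eq_mult_fh_2f[OF assms(1), of f] assms(2) by (simp add: P_def)
  qed
  ultimately show "\<forall>(u, v) \<in> set ?D. \<exists>v' k. (u, v') \<in> lin_span ?C \<and> v = v' + k * ?X"
    by simp
qed

theorem mainTheorem5:
  fixes \<alpha> \<beta> :: nat and f h g :: "4 poly" and b l :: "2 poly"
  assumes "\<alpha> \<ge> 1" and "odd \<beta>"
    and "f * h * g = monom 1 \<beta> - 1"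
    and "b dvd monom 1 \<alpha> - 1"
  shows "\<exists>l' :: 2 poly.
    gen_code \<alpha> \<beta> [(b, 0), (l, f * h + 2 * f)]
    = gen_code \<alpha> \<beta> [(b, 0), (l * mod2 g, 2 * f * g), (l', f * h)]"
proof -
  obtain A B where bezout: "A * h + B * g = 1"
    using bezout_factors_of_cyclic[OF odd_of_nat_square_4[OF \<open>odd \<beta>\<close>] assms(3)] by blast
  show ?thesis
    by (intro exI[of _ "mod2 (1 + 2 * A - B * g) * l"] subset_antisym
        gen_code_fh_2f_subset[OF bezout] gen_code_subset_fh_2f[OF bezout assms(3)])
qed

end
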